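(* For each $\tau>0$ let $t_\tau\in\mathbb R$ be arbitrary and set $\xi_\tau(s)=\big(\phi_\tau^2+\tau^2/\phi_\tau^2\big)(s-t_\tau)$. Then for every sequence $\tau_n\to0$ there is a subsequence along which $\xi_{\tau_n}$ converges uniformly on compact subsets of $\mathbb R$ either to the function $s\mapsto(\cosh(s-s_0))^{-2}$ for some $s_0\in\mathbb R$, or to $0$.
   Context: $\phi_\tau$ is the unique smooth, periodic, non-constant solution of $\dot\phi^2+(\phi^2-\tau)^2=\phi^2$ taking its minimum value at $s=0$. *)

theory Defs
  imports "HOL-Analysis.Analysis"
begin

definition smooth_fun :: "(real \<Rightarrow> real) \<Rightarrow> bool" where
  "smooth_fun f \<longleftrightarrow> (\<forall>k x. ((deriv ^^ k) f) differentiable (at x))"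

definition periodic_fun :: "(real \<Rightarrow> real) \<Rightarrow> bool" where
  "periodic_fun f \<longleftrightarrow> (\<exists>T>0. \<forall>s. f (s + T) = f s)"

definition is_phi :: "real \<Rightarrow> (real \<Rightarrow> real) \<Rightarrow> bool" where
  "is_phi \<tau> \<phi> \<longleftrightarrow> smooth_fun \<phi> \<and> periodic_fun \<phi> \<and> (\<exists>a b. \<phi> a \<noteq> \<phi> b)
     \<and> (\<forall>s. (deriv \<phi> s)\<^sup>2 + ((\<phi> s)\<^sup>2 - \<tau>)\<^sup>2 = (\<phi> s)\<^sup>2)
     \<and> (\<forall>s. \<phi> 0 \<le> \<phi> s)"

definition xi :: "real \<Rightarrow> (real \<Rightarrow> real) \<Rightarrow> real \<Rightarrow> real \<Rightarrow> real" where
  "xi \<tau> \<phi> t s = (\<phi> (s - t))\<^sup>2 + \<tau>\<^sup>2 / (\<phi> (s - t))\<^sup>2"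

definition unif_compact_conv :: "(nat \<Rightarrow> real \<Rightarrow> real) \<Rightarrow> (real \<Rightarrow> real) \<Rightarrow> bool" where
  "unif_compact_conv f g \<longleftrightarrow> (\<forall>K. compact K \<longrightarrow> uniform_limit K f g sequentially)"

end

theory Submission
  imports Defs
begin

text \<open>
  The idea is to trade the first-order equation for \<open>\<phi>\<close> against a second-order equation
  for \<open>\<xi>\<close> itself.  Differentiating \<open>\<phi>'\<^sup>2 + (\<phi>\<^sup>2 - \<tau>)\<^sup>2 = \<phi>\<^sup>2\<close> gives
  \<open>\<phi>'' = \<phi>(1 + 2\<tau> - 2\<phi>\<^sup>2)\<close> (a clopen argument handles the zeros of \<open>\<phi>'\<close>), and then
  \<open>\<xi>'' = 4\<xi>(1 + 2\<tau>) - 6\<xi>\<^sup>2 + 8\<tau>\<^sup>2\<close>, \<open>\<xi>'\<^sup>2 = 4(\<xi>\<^sup>2 - 4\<tau>\<^sup>2)(1 + 2\<tau> - \<xi>)\<close> and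
  \<open>0 < \<xi> \<le> 1 + 2\<tau>\<close>.  Hence the data \<open>(\<xi>(0), \<xi>'(0))\<close> are bounded; along a subsequence
  they converge to a point \<open>(a, b)\<close> of the limiting energy curve \<open>b\<^sup>2 = 4a\<^sup>2(1 - a)\<close>.
  Through such a point passes a solution \<open>g\<close> of the limiting equation \<open>g'' = 4g - 6g\<^sup>2\<close>,
  namely \<open>g = 0\<close> (if \<open>a = 0\<close>) or a translate of \<open>sech\<^sup>2\<close>.  Finally a Gronwall estimate
  for the phase-space distance of solutions of two second-order equations with nearby
  right-hand sides shows that the \<open>\<xi>\<close>'s converge to \<open>g\<close> uniformly on compact sets.
\<close>

definition xi_force :: "real \<Rightarrow> real \<Rightarrow> real" where
  "xi_force \<sigma> y = 4*y*(1 + 2*\<sigma>) - 6*y\<^sup>2 + 8*\<sigma>\<^sup>2"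

definition solves_xi_ode :: "real \<Rightarrow> (real \<Rightarrow> real) \<Rightarrow> (real \<Rightarrow> real) \<Rightarrow> bool" where
  "solves_xi_ode \<sigma> f f1 \<longleftrightarrow>
     (\<forall>s. (f has_real_derivative f1 s) (at s) \<and> (f1 has_real_derivative xi_force \<sigma> (f s)) (at s))"

definition xi_profile :: "real \<Rightarrow> (real \<Rightarrow> real) \<Rightarrow> (real \<Rightarrow> real) \<Rightarrow> bool" where
  "xi_profile \<sigma> f f1 \<longleftrightarrow> solves_xi_ode \<sigma> f f1
     \<and> (\<forall>s. 0 < f s \<and> f s \<le> 1 + 2*\<sigma>)
     \<and> (\<forall>s. (f1 s)\<^sup>2 = 4 * ((f s)\<^sup>2 - 4*\<sigma>\<^sup>2) * (1 + 2*\<sigma> - f s))"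

lemma smooth_fun_DERIV:
  assumes "smooth_fun f"
  shows "(f has_real_derivative deriv f x) (at x)"
    and "(deriv f has_real_derivative deriv (deriv f) x) (at x)"
    and "isCont (deriv (deriv f)) x"
proof -
  have "((deriv ^^ k) f) differentiable (at x)" for k
    using assms unfolding smooth_fun_def by blast
  from this[of 0] this[of 1] this[of 2]
  have "f differentiable (at x)" "deriv f differentiable (at x)"
    "deriv (deriv f) differentiable (at x)"
    by (simp_all add: numeral_2_eq_2)
  then show "(f has_real_derivative deriv f x) (at x)"
    and "(deriv f has_real_derivative deriv (deriv f) x) (at x)"
    and "isCont (deriv (deriv f)) x"
    by (simp_all add: DERIV_deriv_iff_real_differentiable differentiable_imp_continuous_within)
qed

text \<open>If \<open>\<phi>'' = H(\<phi>)\<close> is known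
  wherever \<open>\<phi>' \<noteq> 0\<close>, and \<open>H(\<phi>)\<close> never vanishes where \<open>\<phi>' = 0\<close>, then the equation holds
  everywhere, provided \<open>\<phi>\<close> is not constant: the set where it fails is both open and closed.\<close>
lemma second_order_ode_from_first_integral:
  fixes \<phi> p1 p2 H :: "real \<Rightarrow> real"
  assumes D0: "\<And>x. (\<phi> has_real_derivative p1 x) (at x)"
    and D1: "\<And>x. (p1 has_real_derivative p2 x) (at x)"
    and cont_p2: "\<And>x. isCont p2 x" and cont_H: "continuous_on UNIV H"
    and regular: "\<And>x. p1 x \<noteq> 0 \<Longrightarrow> p2 x = H (\<phi> x)"
    and no_rest: "\<And>x. p1 x = 0 \<Longrightarrow> H (\<phi> x) \<noteq> 0"
    and nonconst: "\<phi> a \<noteq> \<phi> b"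
  shows "p2 x = H (\<phi> x)"
proof -
  define Z where "Z = {x. p2 x \<noteq> H (\<phi> x)}"
  have cont_\<phi>: "continuous_on UNIV \<phi>" and cont_p1: "continuous_on UNIV p1"
    using DERIV_isCont[OF D0] DERIV_isCont[OF D1] by (auto simp: continuous_on_eq_continuous_at)
  have cont_p2': "continuous_on UNIV p2"
    using cont_p2 by (simp add: continuous_on_eq_continuous_at)
  have "continuous_on UNIV (H \<circ> \<phi>)"
    using continuous_on_compose[OF cont_\<phi> continuous_on_subset[OF cont_H]] by simp
  then have "open Z"
    unfolding Z_def using cont_p2' by (intro open_Collect_neq) (auto simp: o_def)
  have p1_Z: "p1 x = 0" if "x \<in> Z" for x
    using regular that unfolding Z_def by blast
  have Z_eq: "Z = {x. p1 x = 0 \<and> p2 x = 0}"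
  proof (intro set_eqI iffI)
    fix x assume xZ: "x \<in> Z"
    have "((\<lambda>_. 0) has_real_derivative p2 x) (at x)"
      by (rule has_field_derivative_transform_within_open[OF D1 \<open>open Z\<close> xZ]) (simp add: p1_Z)
    then have "p2 x = 0" using DERIV_unique DERIV_const by blast
    then show "x \<in> {x. p1 x = 0 \<and> p2 x = 0}" using p1_Z xZ by simp
  next
    fix x assume "x \<in> {x. p1 x = 0 \<and> p2 x = 0}"
    then show "x \<in> Z" using no_rest unfolding Z_def by fastforce
  qed
  have "closed Z"
    unfolding Z_eq using cont_p1 cont_p2'
    by (intro closed_Collect_conj closed_Collect_eq) auto
  have "Z \<noteq> UNIV"
  proof
    assume "Z = UNIV"
    then have "(\<phi> has_real_derivative 0) (at x)" for x
      using D0[of x] p1_Z[of x] by simp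
    then have "\<phi> a = \<phi> b" using DERIV_isconst_all by blast
    with nonconst show False ..
  qed
  then have "Z = {}"
    using clopen[of Z] \<open>open Z\<close> \<open>closed Z\<close> by blast
  then show ?thesis unfolding Z_def by blast
qed

lemma is_phi_ode:
  assumes phi: "is_phi \<sigma> \<phi>" and \<sigma>_pos: "0 < \<sigma>"
  shows "\<phi> x \<noteq> 0"
    and "(\<phi> has_real_derivative deriv \<phi> x) (at x)"
    and "(deriv \<phi> has_real_derivative \<phi> x * (1 + 2*\<sigma> - 2*(\<phi> x)\<^sup>2)) (at x)"
    and "(deriv \<phi> x)\<^sup>2 + ((\<phi> x)\<^sup>2 - \<sigma>)\<^sup>2 = (\<phi> x)\<^sup>2"
proof -
  define H where "H p = p * (1 + 2*\<sigma> - 2*p\<^sup>2)" for p :: real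
  have smooth: "smooth_fun \<phi>" and nonconst: "\<exists>a b. \<phi> a \<noteq> \<phi> b"
    and first: "\<And>s. (deriv \<phi> s)\<^sup>2 + ((\<phi> s)\<^sup>2 - \<sigma>)\<^sup>2 = (\<phi> s)\<^sup>2"
    using phi unfolding is_phi_def by auto
  note D0 = smooth_fun_DERIV(1)[OF smooth] and D1 = smooth_fun_DERIV(2)[OF smooth]
  show nonzero: "\<phi> x \<noteq> 0" for x
  proof
    assume "\<phi> x = 0"
    with first[of x] have "(deriv \<phi> x)\<^sup>2 + \<sigma>\<^sup>2 = 0" by simp
    with \<sigma>_pos show False by (simp add: add_nonneg_eq_0_iff)
  qed
  have regular: "deriv (deriv \<phi>) x = H (\<phi> x)" if "deriv \<phi> x \<noteq> 0" for x
  proof -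
    define E where "E s = (deriv \<phi> s)\<^sup>2 + ((\<phi> s)\<^sup>2 - \<sigma>)\<^sup>2 - (\<phi> s)\<^sup>2" for s
    have "(E has_real_derivative 2 * deriv \<phi> x * (deriv (deriv \<phi>) x - H (\<phi> x))) (at x)"
      unfolding E_def H_def
      by (rule derivative_eq_intros D0 D1 refl | simp)+ (simp add: algebra_simps power2_eq_square)
    moreover have "E = (\<lambda>_. 0)" using first unfolding E_def by (simp add: fun_eq_iff)
    ultimately have "2 * deriv \<phi> x * (deriv (deriv \<phi>) x - H (\<phi> x)) = 0"
      using DERIV_unique DERIV_const by metis
    with that show ?thesis by simp
  qed
  \<comment> \<open>at a rest point with \<open>H(\<phi>) = 0\<close> we would have \<open>\<phi>\<^sup>2 = 1/2 + \<sigma>\<close> and \<open>\<phi>\<^sup>2 = 1/4\<close>\<close>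
  have no_rest: "H (\<phi> x) \<noteq> 0" if "deriv \<phi> x = 0" for x
  proof
    assume "H (\<phi> x) = 0"
    then have sq: "2*(\<phi> x)\<^sup>2 = 1 + 2*\<sigma>" using nonzero[of x] unfolding H_def by simp
    then have half: "(\<phi> x)\<^sup>2 - \<sigma> = 1/2" by simp
    have "(\<phi> x)\<^sup>2 = ((\<phi> x)\<^sup>2 - \<sigma>)\<^sup>2" using first[of x] that by simp
    also have "\<dots> = 1/4" unfolding half by (simp add: power2_eq_square)
    finally show False using sq \<sigma>_pos by simp
  qed
  from nonconst obtain a b where "\<phi> a \<noteq> \<phi> b" by blast
  moreover have "continuous_on UNIV H" unfolding H_def by (intro continuous_intros)
  ultimately have "deriv (deriv \<phi>) x = H (\<phi> x)"
    using second_order_ode_from_first_integral[OF D0 D1 smooth_fun_DERIV(3)[OF smooth] _ regular no_rest]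
    by blast
  then show "(deriv \<phi> has_real_derivative \<phi> x * (1 + 2*\<sigma> - 2*(\<phi> x)\<^sup>2)) (at x)"
    using D1[of x] unfolding H_def by simp
  show "(\<phi> has_real_derivative deriv \<phi> x) (at x)" by (rule D0)
  show "(deriv \<phi> x)\<^sup>2 + ((\<phi> x)\<^sup>2 - \<sigma>)\<^sup>2 = (\<phi> x)\<^sup>2" by (rule first)
qed

lemma xi_ode_from_phi_ode:
  fixes \<psi> p :: "real \<Rightarrow> real" and \<sigma> :: real
  assumes D0: "\<And>s. (\<psi> has_real_derivative p s) (at s)"
    and D1: "\<And>s. (p has_real_derivative \<psi> s * (1 + 2*\<sigma> - 2*(\<psi> s)\<^sup>2)) (at s)"
    and first: "\<And>s. (p s)\<^sup>2 + ((\<psi> s)\<^sup>2 - \<sigma>)\<^sup>2 = (\<psi> s)\<^sup>2"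
    and nonzero: "\<And>s. \<psi> s \<noteq> 0"
  defines "X \<equiv> \<lambda>s. (\<psi> s)\<^sup>2 + \<sigma>\<^sup>2 / (\<psi> s)\<^sup>2"
    and "X1 \<equiv> \<lambda>s. 2 * \<psi> s * p s - 2 * \<sigma>\<^sup>2 * p s / (\<psi> s)^3"
  shows "xi_profile \<sigma> X X1"
proof -
  have p_sq: "(p s)\<^sup>2 = (\<psi> s)\<^sup>2 - ((\<psi> s)\<^sup>2 - \<sigma>)\<^sup>2" for s
    using first[of s] by simp
  have gap: "1 + 2*\<sigma> - X s = (p s)\<^sup>2 / (\<psi> s)\<^sup>2" for s
    unfolding X_def using p_sq[of s] nonzero[of s] by (simp add: field_simps power2_eq_square)
  have "(X has_real_derivative X1 s) (at s)" for s
    unfolding X_def X1_def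
    apply (rule derivative_eq_intros D0 refl | simp add: nonzero)+
    using nonzero[of s] apply (simp add: field_simps)
    by algebra
  moreover have "(X1 has_real_derivative xi_force \<sigma> (X s)) (at s)" for s
    unfolding X_def X1_def xi_force_def
    apply (rule derivative_eq_intros D0 D1 refl | simp add: nonzero)+
    using nonzero[of s] apply (simp add: field_simps)
    using p_sq[of s] by algebra
  ultimately have "solves_xi_ode \<sigma> X X1" unfolding solves_xi_ode_def by blast
  moreover have "0 < X s \<and> X s \<le> 1 + 2*\<sigma>" for s
  proof
    show "0 < X s" unfolding X_def using nonzero[of s] by (simp add: add_pos_nonneg)
    have "0 \<le> (p s)\<^sup>2 / (\<psi> s)\<^sup>2" by simp
    then show "X s \<le> 1 + 2*\<sigma>" using gap[of s] by linarith
  qed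
  moreover have "(X1 s)\<^sup>2 = 4 * ((X s)\<^sup>2 - 4*\<sigma>\<^sup>2) * (1 + 2*\<sigma> - X s)" for s
    unfolding gap unfolding X_def X1_def using nonzero[of s] apply (simp add: field_simps)
    using p_sq[of s] by algebra
  ultimately show ?thesis unfolding xi_profile_def by blast
qed

lemma xi_is_profile:
  assumes phi: "is_phi \<sigma> \<phi>" and \<sigma>_pos: "0 < \<sigma>"
  shows "\<exists>f1. xi_profile \<sigma> (xi \<sigma> \<phi> t) f1"
proof -
  note ode = is_phi_ode[OF phi \<sigma>_pos]
  have D0: "((\<lambda>s. \<phi> (s - t)) has_real_derivative deriv \<phi> (s - t)) (at s)" for s
    using DERIV_shift[of \<phi> _ s "-t"] ode(2)[of "s - t"] by simp
  have D1: "((\<lambda>s. deriv \<phi> (s - t)) has_real_derivative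
              \<phi> (s - t) * (1 + 2*\<sigma> - 2*(\<phi> (s - t))\<^sup>2)) (at s)" for s
    using DERIV_shift[of "deriv \<phi>" _ s "-t"] ode(3)[of "s - t"] by simp
  have xi_eq: "xi \<sigma> \<phi> t = (\<lambda>s. (\<phi> (s - t))\<^sup>2 + \<sigma>\<^sup>2 / (\<phi> (s - t))\<^sup>2)"
    by (simp add: xi_def fun_eq_iff)
  show ?thesis unfolding xi_eq using xi_ode_from_phi_ode[OF D0 D1 ode(4) ode(1)] by blast
qed

lemma gronwall_forward:
  fixes w w' :: "real \<Rightarrow> real"
  assumes Dw: "\<And>y. (w has_real_derivative w' y) (at y)"
    and growth: "\<And>y. w' y \<le> L * w y + c" and L_pos: "0 < L" and x_nonneg: "0 \<le> x"
  shows "w x + c / L \<le> (w 0 + c / L) * exp (L * x)"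
proof -
  define h where "h y = (w y + c / L) * exp (- L * y)" for y
  have "h x \<le> h 0"
  proof (rule DERIV_nonpos_imp_nonincreasing[OF x_nonneg])
    fix y
    have "(h has_real_derivative (w' y - L * w y - c) * exp (- L * y)) (at y)"
      unfolding h_def
      by (rule derivative_eq_intros Dw refl | simp)+ (use L_pos in \<open>simp add: field_simps\<close>)
    moreover have "(w' y - L * w y - c) * exp (- L * y) \<le> 0"
      using growth[of y] by (simp add: mult_nonpos_nonneg)
    ultimately show "\<exists>d. (h has_real_derivative d) (at y) \<and> d \<le> 0" by blast
  qed
  then show ?thesis unfolding h_def by (simp add: exp_minus field_simps)
qed

text \<open>Two-sided Gronwall estimate, obtained from the forward one by time reversal.\<close>
lemma gronwall_two_sided:
  fixes w w' :: "real \<Rightarrow> real"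
  assumes Dw: "\<And>y. (w has_real_derivative w' y) (at y)"
    and growth: "\<And>y. \<bar>w' y\<bar> \<le> L * w y + c" and L_pos: "0 < L"
  shows "w x + c / L \<le> (w 0 + c / L) * exp (L * \<bar>x\<bar>)"
proof (cases "0 \<le> x")
  case True
  show ?thesis
    using gronwall_forward[OF Dw _ L_pos True] growth True by (simp add: abs_le_iff)
next
  case False
  have "((\<lambda>y. w (- y)) has_real_derivative - w' (- y)) (at y)" for y
    using DERIV_mirror Dw by blast
  from gronwall_forward[OF this _ L_pos, of c "- x"] growth False
  show ?thesis by (simp add: abs_le_iff)
qed

lemma second_order_comparison:
  fixes f f1 g g1 F G :: "real \<Rightarrow> real" and S :: "real set"
  assumes df: "\<And>x. (f has_real_derivative f1 x) (at x)"
      and df1: "\<And>x. (f1 has_real_derivative F (f x)) (at x)"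
      and dg: "\<And>x. (g has_real_derivative g1 x) (at x)"
      and dg1: "\<And>x. (g1 has_real_derivative G (g x)) (at x)"
      and f_S: "\<And>x. f x \<in> S" and g_S: "\<And>x. g x \<in> S"
      and close: "\<And>y. y \<in> S \<Longrightarrow> \<bar>F y - G y\<bar> \<le> \<delta>"
      and lip: "\<And>y z. y \<in> S \<Longrightarrow> z \<in> S \<Longrightarrow> \<bar>G y - G z\<bar> \<le> L * \<bar>y - z\<bar>"
      and L_nonneg: "0 \<le> L"
  shows "(f x - g x)\<^sup>2 + (f1 x - g1 x)\<^sup>2
           \<le> ((f 0 - g 0)\<^sup>2 + (f1 0 - g1 0)\<^sup>2 + \<delta>\<^sup>2 / (L + 2)) * exp ((L + 2) * \<bar>x\<bar>)"
proof -
  define w where "w y = (f y - g y)\<^sup>2 + (f1 y - g1 y)\<^sup>2" for y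
  define w' where "w' y = 2*(f y - g y)*(f1 y - g1 y) + 2*(f1 y - g1 y)*(F (f y) - G (g y))" for y
  have Dw: "(w has_real_derivative w' y) (at y)" for y
    unfolding w_def w'_def
    by (rule derivative_eq_intros df df1 dg dg1 refl | simp)+ (simp add: algebra_simps)
  have growth: "\<bar>w' y\<bar> \<le> (L + 2) * w y + \<delta>\<^sup>2" for y
  proof -
    define e e1 D where "e = f y - g y" and "e1 = f1 y - g1 y" and "D = F (f y) - G (g y)"
    have "\<bar>D\<bar> \<le> \<bar>F (f y) - G (f y)\<bar> + \<bar>G (f y) - G (g y)\<bar>" unfolding D_def by linarith
    also have "\<dots> \<le> \<delta> + L * \<bar>e\<bar>" unfolding e_def using close lip f_S g_S by (meson add_mono)
    finally have D_bound: "\<bar>D\<bar> \<le> \<delta> + L * \<bar>e\<bar>" .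
    have "\<bar>w' y\<bar> \<le> 2*\<bar>e\<bar>*\<bar>e1\<bar> + 2*\<bar>e1\<bar>*\<bar>D\<bar>"
      unfolding w'_def e_def[symmetric] e1_def[symmetric] D_def[symmetric]
      by (simp add: abs_mult abs_triangle_ineq[THEN order_trans])
    also have "\<dots> \<le> 2*\<bar>e\<bar>*\<bar>e1\<bar> + 2*\<bar>e1\<bar>*(\<delta> + L * \<bar>e\<bar>)"
      using D_bound by (simp add: mult_left_mono)
    also have "\<dots> = (1 + L) * (2*\<bar>e\<bar>*\<bar>e1\<bar>) + 2*\<bar>e1\<bar>*\<delta>" by (simp add: algebra_simps)
    also have "\<dots> \<le> (1 + L) * (e\<^sup>2 + e1\<^sup>2) + (e1\<^sup>2 + \<delta>\<^sup>2)"
    proof (rule add_mono)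
      show "(1 + L) * (2*\<bar>e\<bar>*\<bar>e1\<bar>) \<le> (1 + L) * (e\<^sup>2 + e1\<^sup>2)"
        using sum_squares_bound[of "\<bar>e\<bar>" "\<bar>e1\<bar>"] L_nonneg by (simp add: mult_left_mono)
      have "2*\<bar>e1\<bar>*\<delta> \<le> 2*\<bar>e1\<bar>*\<bar>\<delta>\<bar>" by (simp add: mult_left_mono)
      then show "2*\<bar>e1\<bar>*\<delta> \<le> e1\<^sup>2 + \<delta>\<^sup>2"
        using sum_squares_bound[of "\<bar>e1\<bar>" "\<bar>\<delta>\<bar>"] by simp
    qed
    also have "\<dots> \<le> (L + 2) * w y + \<delta>\<^sup>2"
      unfolding w_def e_def[symmetric] e1_def[symmetric] by (simp add: algebra_simps)
    finally show ?thesis .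
  qed
  have "w x \<le> w x + \<delta>\<^sup>2 / (L + 2)" using L_nonneg by simp
  also have "\<dots> \<le> (w 0 + \<delta>\<^sup>2 / (L + 2)) * exp ((L + 2) * \<bar>x\<bar>)"
    using gronwall_two_sided[OF Dw growth] L_nonneg by simp
  finally show ?thesis unfolding w_def .
qed

lemma xi_force_perturbation:
  assumes "0 \<le> \<sigma>" "y \<in> {0..2}"
  shows "\<bar>xi_force \<sigma> y - xi_force 0 y\<bar> \<le> 16*\<sigma> + 8*\<sigma>\<^sup>2"
proof -
  have "xi_force \<sigma> y - xi_force 0 y = 8*\<sigma>*y + 8*\<sigma>\<^sup>2"
    unfolding xi_force_def by (simp add: algebra_simps)
  moreover have "\<sigma> * y \<le> \<sigma> * 2" using assms by (simp add: mult_left_mono)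
  moreover have "0 \<le> \<sigma> * y" using assms by simp
  ultimately show ?thesis by simp
qed

lemma xi_force_lipschitz:
  assumes "y \<in> {0..2}" "z \<in> {0..2}"
  shows "\<bar>xi_force 0 y - xi_force 0 z\<bar> \<le> 20 * \<bar>y - z\<bar>"
proof -
  have "xi_force 0 y - xi_force 0 z = (y - z) * (4 - 6*(y + z))"
    unfolding xi_force_def by (simp add: algebra_simps power2_eq_square)
  moreover have "\<bar>4 - 6*(y + z)\<bar> \<le> 20" using assms by auto
  ultimately show ?thesis by (simp add: abs_mult mult_left_mono mult.commute)
qed

lemma sech_sq_solves_limit_ode:
  fixes c :: real
  shows "solves_xi_ode 0 (\<lambda>s. 1 / (cosh (s - c))\<^sup>2) (\<lambda>s. -2 * sinh (s - c) / (cosh (s - c))^3)"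
    and "1 / (cosh (s - c))\<^sup>2 \<in> {0..1}"
proof -
  have cosh_nz: "cosh (x - c) \<noteq> 0" for x :: real
    using cosh_real_pos[of "x - c"] by simp
  have "((\<lambda>s. 1 / (cosh (s - c))\<^sup>2) has_real_derivative -2 * sinh (x - c) / (cosh (x - c))^3) (at x)"
    for x
    apply (rule derivative_eq_intros refl | simp add: cosh_nz)+
    using cosh_nz[of x] by (simp add: field_simps eval_nat_numeral)
  moreover have "((\<lambda>s. -2 * sinh (s - c) / (cosh (s - c))^3) has_real_derivative
                    xi_force 0 (1 / (cosh (x - c))\<^sup>2)) (at x)" for x
    unfolding xi_force_def
    apply (rule derivative_eq_intros refl | simp add: cosh_nz)+
    using cosh_nz[of x] apply (simp add: field_simps)
    using cosh_square_eq[of "x - c"] by algebra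
  ultimately show "solves_xi_ode 0 (\<lambda>s. 1 / (cosh (s - c))\<^sup>2) (\<lambda>s. -2 * sinh (s - c) / (cosh (s - c))^3)"
    unfolding solves_xi_ode_def by blast
  have "1 \<le> (cosh (s - c))\<^sup>2" using cosh_real_ge_1[of "s - c"] by simp
  then show "1 / (cosh (s - c))\<^sup>2 \<in> {0..1}" by simp
qed

lemma sech_sq_initial_data:
  fixes a b :: real
  assumes a: "0 < a" "a \<le> 1" and b: "b\<^sup>2 = 4*a\<^sup>2*(1 - a)"
  shows "\<exists>s0. 1 / (cosh (0 - s0))\<^sup>2 = a \<and> -2 * sinh (0 - s0) / (cosh (0 - s0))^3 = b"
proof -
  define c where "c = arcosh (1 / sqrt a)"
  have ge: "1 \<le> 1 / sqrt a" using a by (simp add: real_sqrt_le_1_iff)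
  have c_nonneg: "0 \<le> c" unfolding c_def using arcosh_nonneg_real[OF ge] .
  have cosh_sq: "(cosh c)\<^sup>2 = 1 / a"
    unfolding c_def cosh_arcosh_real[OF ge] using a by (simp add: power_divide)
  have sinh_sq: "(sinh c)\<^sup>2 = 1/a - 1" using cosh_square_eq[of c] cosh_sq by simp
  have slope: "2 * sinh c / (cosh c)^3 = \<bar>b\<bar>"
  proof -
    have "(2 * sinh c / (cosh c)^3)\<^sup>2 = 4 * (sinh c)\<^sup>2 / ((cosh c)\<^sup>2)^3"
      by (simp add: power_divide power_mult_distrib flip: power_mult)
    also have "\<dots> = 4*a\<^sup>2*(1 - a)"
      unfolding sinh_sq cosh_sq using a by (simp add: field_simps power2_eq_square power3_eq_cube)
    finally have "(2 * sinh c / (cosh c)^3)\<^sup>2 = \<bar>b\<bar>\<^sup>2" using b by simp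
    moreover have "0 \<le> 2 * sinh c / (cosh c)^3" using c_nonneg cosh_real_pos[of c] by simp
    ultimately show ?thesis by (metis abs_ge_zero power2_abs power2_eq_iff_nonneg)
  qed
  show ?thesis
  proof (cases "0 \<le> b")
    case True
    then show ?thesis using slope cosh_sq a by (intro exI[of _ c]) simp
  next
    case False
    then show ?thesis using slope cosh_sq a by (intro exI[of _ "-c"]) simp
  qed
qed

lemma limit_profile:
  fixes a b :: real
  assumes a: "0 \<le> a" "a \<le> 1" and b: "b\<^sup>2 = 4*a\<^sup>2*(1 - a)"
  obtains g g1 where "solves_xi_ode 0 g g1" "\<And>s. g s \<in> {0..2}" "g 0 = a" "g1 0 = b"
    and "g = (\<lambda>s. 0) \<or> (\<exists>s0. g = (\<lambda>s. 1 / (cosh (s - s0))\<^sup>2))"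
proof (cases "a = 0")
  case True
  then have "b = 0" using b by simp
  have "solves_xi_ode 0 (\<lambda>s. 0) (\<lambda>s. 0)" unfolding solves_xi_ode_def xi_force_def by simp
  with that show ?thesis using True \<open>b = 0\<close> by auto
next
  case False
  then obtain s0 where s0: "1 / (cosh (0 - s0))\<^sup>2 = a" "-2 * sinh (0 - s0) / (cosh (0 - s0))^3 = b"
    using sech_sq_initial_data[of a b] a b by force
  note sech = sech_sq_solves_limit_ode[where c = s0]
  have "{0..1} \<subseteq> {0..2::real}" by simp
  then have "1 / (cosh (s - s0))\<^sup>2 \<in> {0..2}" for s using sech(2)[of s] by blast
  with s0 show ?thesis by (intro that[OF sech(1)]) auto
qed

lemma xi_profile_bounds:
  assumes prof: "xi_profile \<sigma> f f1" and \<sigma>_le: "\<sigma> \<le> B"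
  shows "\<bar>f s\<bar> \<le> 1 + 2*B" and "\<bar>f1 s\<bar> \<le> sqrt (4 * (1 + 2*B)^3)"
proof -
  define M where "M = 1 + 2*B"
  have f_bounds: "0 < f s" "f s \<le> 1 + 2*\<sigma>"
    and energy: "(f1 s)\<^sup>2 = 4 * ((f s)\<^sup>2 - 4*\<sigma>\<^sup>2) * (1 + 2*\<sigma> - f s)"
    using prof unfolding xi_profile_def by auto
  show f_abs: "\<bar>f s\<bar> \<le> 1 + 2*B" using f_bounds \<sigma>_le by simp
  have gap: "0 \<le> 1 + 2*\<sigma> - f s" "1 + 2*\<sigma> - f s \<le> M"
    using f_bounds \<sigma>_le unfolding M_def by auto
  have "(f s)\<^sup>2 \<le> M\<^sup>2" using power_mono[OF f_abs abs_ge_zero, of 2] unfolding M_def by simp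
  then have "(f s)\<^sup>2 - 4*\<sigma>\<^sup>2 \<le> M\<^sup>2" by (smt (verit) zero_le_power2)
  then have "((f s)\<^sup>2 - 4*\<sigma>\<^sup>2) * (1 + 2*\<sigma> - f s) \<le> M\<^sup>2 * M"
    using gap by (intro mult_mono) auto
  then have "4 * (((f s)\<^sup>2 - 4*\<sigma>\<^sup>2) * (1 + 2*\<sigma> - f s)) \<le> 4 * M^3"
    by (simp add: power3_eq_cube power2_eq_square)
  then have "(f1 s)\<^sup>2 \<le> 4 * M^3" unfolding energy by (simp only: mult.assoc)
  then show "\<bar>f1 s\<bar> \<le> sqrt (4 * (1 + 2*B)^3)" unfolding M_def by (simp add: real_le_rsqrt)
qed

lemma xi_profile_data_subseq:
  fixes \<sigma> :: "nat \<Rightarrow> real" and F F1 :: "nat \<Rightarrow> real \<Rightarrow> real"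
  assumes \<sigma>_lim: "\<sigma> \<longlonglongrightarrow> 0" and prof: "\<And>n. xi_profile (\<sigma> n) (F n) (F1 n)"
  obtains r a b where "strict_mono r"
    and "(\<lambda>n. F (r n) 0) \<longlonglongrightarrow> a" "(\<lambda>n. F1 (r n) 0) \<longlonglongrightarrow> b"
    and "0 \<le> a" "a \<le> 1" "b\<^sup>2 = 4*a\<^sup>2*(1 - a)"
proof -
  define x y where "x n = F n 0" and "y n = F1 n 0" for n
  have x_bounds: "0 < x n" "x n \<le> 1 + 2 * \<sigma> n"
    and energy: "(y n)\<^sup>2 = 4 * ((x n)\<^sup>2 - 4*(\<sigma> n)\<^sup>2) * (1 + 2*\<sigma> n - x n)" for n
    using prof[of n] unfolding xi_profile_def x_def y_def by auto
  obtain B where "\<And>n. norm (\<sigma> n) \<le> B"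
    using BseqE[OF convergent_imp_Bseq[OF convergentI[OF \<sigma>_lim]]] by blast
  then have "\<sigma> n \<le> B" for n by (simp add: abs_le_iff)
  then have "range (\<lambda>n. (x n, y n)) \<subseteq> cball 0 (1 + 2*B) \<times> cball 0 (sqrt (4 * (1 + 2*B)^3))"
    using xi_profile_bounds[OF prof] unfolding x_def y_def by auto
  then have "bounded (range (\<lambda>n. (x n, y n)))"
    using bounded_subset bounded_Times bounded_cball by metis
  then obtain l r where r: "strict_mono r" and lim: "((\<lambda>n. (x n, y n)) \<circ> r) \<longlonglongrightarrow> l"
    using bounded_imp_convergent_subsequence by blast
  have x_lim: "(\<lambda>n. x (r n)) \<longlonglongrightarrow> fst l" and y_lim: "(\<lambda>n. y (r n)) \<longlonglongrightarrow> snd l"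
    using tendsto_fst[OF lim] tendsto_snd[OF lim] by (simp_all add: o_def)
  have \<sigma>_r: "(\<lambda>n. \<sigma> (r n)) \<longlonglongrightarrow> 0" using LIMSEQ_subseq_LIMSEQ[OF \<sigma>_lim r] by (simp add: o_def)
  have a_nonneg: "0 \<le> fst l"
    using x_lim x_bounds by (intro LIMSEQ_le_const[OF x_lim]) (auto intro: less_imp_le)
  have a_le: "fst l \<le> 1"
  proof -
    have "(\<lambda>n. 1 + 2 * \<sigma> (r n)) \<longlonglongrightarrow> 1 + 2 * 0" by (intro tendsto_intros \<sigma>_r)
    then show ?thesis using x_bounds by (intro LIMSEQ_le[OF x_lim]) auto
  qed
  have "(\<lambda>n. (y (r n))\<^sup>2) \<longlonglongrightarrow> (snd l)\<^sup>2" by (intro tendsto_intros y_lim)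
  moreover have "(\<lambda>n. (y (r n))\<^sup>2) \<longlonglongrightarrow> 4 * ((fst l)\<^sup>2 - 4*0\<^sup>2) * (1 + 2*0 - fst l)"
    unfolding energy by (intro tendsto_intros x_lim \<sigma>_r)
  ultimately have curve: "(snd l)\<^sup>2 = 4 * (fst l)\<^sup>2 * (1 - fst l)"
    using LIMSEQ_unique by fastforce
  show ?thesis using that[OF r _ _ a_nonneg a_le curve] x_lim y_lim unfolding x_def y_def by blast
qed

lemma unif_compact_conv_from_initial_data:
  fixes \<sigma> :: "nat \<Rightarrow> real" and F F1 :: "nat \<Rightarrow> real \<Rightarrow> real" and g g1 :: "real \<Rightarrow> real"
  assumes \<sigma>_lim: "\<sigma> \<longlonglongrightarrow> 0" and \<sigma>_nonneg: "\<And>n. 0 \<le> \<sigma> n"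
    and prof: "\<And>n. xi_profile (\<sigma> n) (F n) (F1 n)"
    and g_ode: "solves_xi_ode 0 g g1" and g_bounds: "\<And>s. g s \<in> {0..2}"
    and F_0: "(\<lambda>n. F n 0) \<longlonglongrightarrow> g 0" and F1_0: "(\<lambda>n. F1 n 0) \<longlonglongrightarrow> g1 0"
  shows "unif_compact_conv F g"
  unfolding unif_compact_conv_def
proof (intro allI impI)
  fix K :: "real set" assume "compact K"
  then obtain R where R: "\<And>x. x \<in> K \<Longrightarrow> \<bar>x\<bar> \<le> R"
    using compact_imp_bounded bounded_iff by (metis real_norm_def)
  define \<delta> where "\<delta> n = 16 * \<sigma> n + 8 * (\<sigma> n)\<^sup>2" for n
  define Q where "Q n = ((F n 0 - g 0)\<^sup>2 + (F1 n 0 - g1 0)\<^sup>2 + (\<delta> n)\<^sup>2 / 22) * exp (22 * R)" for n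
  \<comment> \<open>\<open>Q n\<close> bounds the squared distance to \<open>g\<close> on \<open>K\<close> once \<open>F n\<close> stays in \<open>[0, 2]\<close>\<close>
  have dist_bound: "(F n x - g x)\<^sup>2 \<le> Q n" if "\<sigma> n < 1/2" "x \<in> K" for n x
  proof -
    have F_ode: "solves_xi_ode (\<sigma> n) (F n) (F1 n)"
      and F_bounds: "\<And>s. 0 < F n s \<and> F n s \<le> 1 + 2 * \<sigma> n"
      using prof[of n] unfolding xi_profile_def by auto
    have "F n s \<in> {0..2}" for s
      using F_bounds[of s] \<open>\<sigma> n < 1/2\<close> by (simp add: less_imp_le)
    then have "(F n x - g x)\<^sup>2 + (F1 n x - g1 x)\<^sup>2
        \<le> ((F n 0 - g 0)\<^sup>2 + (F1 n 0 - g1 0)\<^sup>2 + (\<delta> n)\<^sup>2 / (20 + 2)) * exp ((20 + 2) * \<bar>x\<bar>)"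
      using F_ode g_ode g_bounds unfolding solves_xi_ode_def \<delta>_def
      by (intro second_order_comparison[where F = "xi_force (\<sigma> n)" and G = "xi_force 0" and S = "{0..2}"])
         (auto intro: xi_force_perturbation[OF \<sigma>_nonneg] xi_force_lipschitz)
    also have "\<dots> = ((F n 0 - g 0)\<^sup>2 + (F1 n 0 - g1 0)\<^sup>2 + (\<delta> n)\<^sup>2 / 22) * exp (22 * \<bar>x\<bar>)"
      by simp
    also have "\<dots> \<le> Q n" unfolding Q_def using R[OF that(2)] by (intro mult_left_mono) auto
    finally show ?thesis by (smt (verit) zero_le_power2)
  qed
  show "uniform_limit K F g sequentially"
    unfolding uniform_limit_iff
  proof (intro allI impI)
    fix e :: real assume e: "0 < e"
    have "Q \<longlonglongrightarrow> ((g 0 - g 0)\<^sup>2 + (g1 0 - g1 0)\<^sup>2 + (16 * 0 + 8 * 0\<^sup>2)\<^sup>2 / 22) * exp (22 * R)"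
      unfolding Q_def \<delta>_def by (intro tendsto_intros F_0 F1_0 \<sigma>_lim) simp
    then have "\<forall>\<^sub>F n in sequentially. Q n < e\<^sup>2" using e by (intro order_tendstoD(2)) auto
    moreover have "\<forall>\<^sub>F n in sequentially. \<sigma> n < 1/2" using \<sigma>_lim by (intro order_tendstoD(2)) auto
    ultimately show "\<forall>\<^sub>F n in sequentially. \<forall>x\<in>K. dist (F n x) (g x) < e"
    proof eventually_elim
      case (elim n)
      show ?case
      proof
        fix x assume "x \<in> K"
        then have "\<bar>F n x - g x\<bar>\<^sup>2 < e\<^sup>2" using dist_bound[of n x] elim by simp
        then have "\<bar>F n x - g x\<bar> < e" by (rule power_less_imp_less_base[OF _ less_imp_le[OF e]])
        then show "dist (F n x) (g x) < e" by (simp add: dist_real_def)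
      qed
    qed
  qed
qed

theorem lemma4p4:
  fixes \<phi> :: "real \<Rightarrow> real \<Rightarrow> real" and t :: "real \<Rightarrow> real" and \<tau> :: "nat \<Rightarrow> real"
  assumes "\<And>\<sigma>. \<sigma> > 0 \<Longrightarrow> is_phi \<sigma> (\<phi> \<sigma>)"
    and "\<And>n. \<tau> n > 0"
    and "\<tau> \<longlonglongrightarrow> 0"
  shows "\<exists>r. strict_mono r \<and>
    ((\<exists>s0. unif_compact_conv (\<lambda>n. xi (\<tau> (r n)) (\<phi> (\<tau> (r n))) (t (\<tau> (r n))))
                              (\<lambda>s. 1 / (cosh (s - s0))\<^sup>2))
     \<or> unif_compact_conv (\<lambda>n. xi (\<tau> (r n)) (\<phi> (\<tau> (r n))) (t (\<tau> (r n)))) (\<lambda>s. 0))"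
proof -
  define \<Xi> where "\<Xi> n = xi (\<tau> n) (\<phi> (\<tau> n)) (t (\<tau> n))" for n
  have "\<forall>n. \<exists>f1. xi_profile (\<tau> n) (\<Xi> n) f1"
    unfolding \<Xi>_def using xi_is_profile[OF assms(1)[OF assms(2)] assms(2)] by blast
  then obtain \<Xi>1 where prof: "\<And>n. xi_profile (\<tau> n) (\<Xi> n) (\<Xi>1 n)" by (metis choice)
  obtain r a b where r: "strict_mono r" and a_lim: "(\<lambda>n. \<Xi> (r n) 0) \<longlonglongrightarrow> a"
    and b_lim: "(\<lambda>n. \<Xi>1 (r n) 0) \<longlonglongrightarrow> b" and ab: "0 \<le> a" "a \<le> 1" "b\<^sup>2 = 4*a\<^sup>2*(1 - a)"
    by (rule xi_profile_data_subseq[OF assms(3) prof])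
  obtain g g1 where g: "solves_xi_ode 0 g g1" "\<And>s. g s \<in> {0..2}" "g 0 = a" "g1 0 = b"
    and g_cases: "g = (\<lambda>s. 0) \<or> (\<exists>s0. g = (\<lambda>s. 1 / (cosh (s - s0))\<^sup>2))"
    by (rule limit_profile[OF ab]) auto
  have "(\<tau> \<circ> r) \<longlonglongrightarrow> 0" by (rule LIMSEQ_subseq_LIMSEQ[OF assms(3) r])
  then have conv: "unif_compact_conv (\<lambda>n. \<Xi> (r n)) g"
    using prof a_lim b_lim g less_imp_le[OF assms(2)]
    by (intro unif_compact_conv_from_initial_data[where \<sigma> = "\<tau> \<circ> r" and ?F1.0 = "\<lambda>n. \<Xi>1 (r n)"
          and ?g1.0 = g1]) (simp_all add: o_def)
  from g_cases show ?thesis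
  proof
    assume "g = (\<lambda>s. 0)"
    with conv show ?thesis unfolding \<Xi>_def by (intro exI[of _ r] conjI r disjI2) simp
  next
    assume "\<exists>s0. g = (\<lambda>s. 1 / (cosh (s - s0))\<^sup>2)"
    with conv show ?thesis unfolding \<Xi>_def by (intro exI[of _ r] conjI r disjI1) auto
  qed
qed

end
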